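(* Let $G$ be any connected graph on $n$ nodes, $K=K_n$ the complete graph on the same $n$ nodes, and $v\in\mathbb R^n$ any initial vector. Run the modified process (defined below) on $G$ and on $K$, both from $v$, and let $T_G(t)=\|v_G(t)-\bar v\|_1$, $T_K(t)=\|v_K(t)-\bar v\|_1$. Then $\mathbb E_v[T_K(t)]\le\mathbb E_v[T_G(t)]$ for all $t\ge0$.
   Context: Modified averaging process on a graph $H$ with vertex set $\{1,\dots,n\}$: the state vector $v_H(t)\in\mathbb R^n$ starts at $v_H(0)=v$; at each step an unordered pair $\{i,j\}$ of distinct vertices is chosen uniformly at random among all $\binom n2$ pairs (independently of previous steps); if $\{i,j\}$ is an edge of $H$, both $v_i$ and $v_j$ are replaced by $(v_i+v_j)/2$, otherwise the state is unchanged. $\bar v=(a,\dots,a)^T$ with $a=\frac1n\sum_i v_i$. Expectation is over the random sequence of chosen pairs. *)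

theory Defs
  imports "HOL-Probability.Probability"
begin

text \<open>Vertices are 0..<n; vectors in R^n are functions nat => real (only indices < n matter).
  An edge / chosen pair is a 2-element set {i,j}.\<close>

definition pairs :: "nat \<Rightarrow> nat set set" where
  "pairs n = {{i, j} | i j. i < n \<and> j < n \<and> i \<noteq> j}"

definition graph_on :: "nat \<Rightarrow> nat set set \<Rightarrow> bool" where
  "graph_on n E \<longleftrightarrow> E \<subseteq> pairs n"

definition connected_graph :: "nat \<Rightarrow> nat set set \<Rightarrow> bool" where
  "connected_graph n E \<longleftrightarrow> graph_on n E \<and>
     (\<forall>i<n. \<forall>j<n. (\<lambda>x y. {x, y} \<in> E)\<^sup>*\<^sup>* i j)"

definition complete_graph :: "nat \<Rightarrow> nat set set" where
  "complete_graph n = pairs n"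

definition avg_step :: "nat set set \<Rightarrow> nat set \<Rightarrow> (nat \<Rightarrow> real) \<Rightarrow> (nat \<Rightarrow> real)" where
  "avg_step E p w = (if p \<in> E then (\<lambda>k. if k \<in> p then (\<Sum>j\<in>p. w j) / 2 else w k) else w)"

text \<open>Distribution of the state v_H(t): at each step a pair is chosen uniformly among
  all n-choose-2 pairs, independently.\<close>
fun process :: "nat \<Rightarrow> nat set set \<Rightarrow> (nat \<Rightarrow> real) \<Rightarrow> nat \<Rightarrow> (nat \<Rightarrow> real) pmf" where
  "process n E v 0 = return_pmf v"
| "process n E v (Suc t) =
     bind_pmf (process n E v t) (\<lambda>w. map_pmf (\<lambda>p. avg_step E p w) (pmf_of_set (pairs n)))"

definition mean_val :: "nat \<Rightarrow> (nat \<Rightarrow> real) \<Rightarrow> real" where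
  "mean_val n v = (\<Sum>i<n. v i) / real n"

definition l1_dev :: "nat \<Rightarrow> (nat \<Rightarrow> real) \<Rightarrow> (nat \<Rightarrow> real) \<Rightarrow> real" where
  "l1_dev n v w = (\<Sum>i<n. \<bar>w i - mean_val n v\<bar>)"

definition expected_T :: "nat \<Rightarrow> nat set set \<Rightarrow> (nat \<Rightarrow> real) \<Rightarrow> nat \<Rightarrow> real" where
  "expected_T n E v t = measure_pmf.expectation (process n E v t) (l1_dev n v)"

end

theory Submission
  imports Defs "HOL-Combinatorics.Transposition"
begin

text \<open>Let \<open>\<Phi>\<^sub>H(t, w)\<close> be the expected cost after \<open>t\<close> steps of the process on \<open>H\<close> started
  at \<open>w\<close>, for a cost that is convex and invariant under permuting coordinates, such as
  \<open>T\<close>. Both properties propagate to \<open>\<Phi>\<^sub>K(t, -)\<close> by induction on \<open>t\<close> (for symmetry this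
  uses that \<open>K\<close> is invariant under relabelling vertices). Averaging along the pair
  \<open>{a, b}\<close> replaces \<open>w\<close> by the midpoint of \<open>w\<close> and its \<open>(a b)\<close>-swap, so it cannot
  increase \<open>\<Phi>\<^sub>K(t, -)\<close>. Hence, step by step, ignoring a chosen pair that is not an edge
  of \<open>G\<close> is never better than averaging along it, i.e. \<open>\<Phi>\<^sub>K \<le> \<Phi>\<^sub>G\<close>.\<close>

lemma finite_pairs: "finite (pairs n)"
proof -
  have "pairs n \<subseteq> Pow {..<n}" by (auto simp: pairs_def)
  thus ?thesis by (rule finite_subset) simp
qed

lemma pairs_nonempty: "2 \<le> n \<Longrightarrow> pairs n \<noteq> {}"
proof -
  assume "2 \<le> n"
  hence "{0, 1} \<in> pairs n" unfolding pairs_def by force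
  thus ?thesis by auto
qed

lemma pairs_empty: "n < 2 \<Longrightarrow> pairs n = {}"
  by (auto simp: pairs_def)

lemma transpose_image_in_pairs:
  assumes "a < n" "b < n" "p \<in> pairs n"
  shows "Transposition.transpose a b ` p \<in> pairs n"
proof -
  obtain i j where p: "p = {i, j}" "i < n" "j < n" "i \<noteq> j"
    using assms(3) by (auto simp: pairs_def)
  let ?s = "Transposition.transpose a b"
  have "?s ` p = {?s i, ?s j}" "?s i \<noteq> ?s j" "?s i < n" "?s j < n"
    using p assms(1,2) by (auto simp: Transposition.transpose_def)
  thus ?thesis unfolding pairs_def by blast
qed

lemma bij_betw_transpose_image_pairs:
  assumes "a < n" "b < n"
  shows "bij_betw ((`) (Transposition.transpose a b)) (pairs n) (pairs n)"
  by (rule bij_betw_byWitness[where f' = "(`) (Transposition.transpose a b)"])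
     (auto simp: image_image transpose_image_in_pairs[OF assms])

lemma process_Suc_first_step:
  "process n E w (Suc t) =
     bind_pmf (pmf_of_set (pairs n)) (\<lambda>p. process n E (avg_step E p w) t)"
proof (induction t arbitrary: w)
  case 0
  show ?case by (simp add: bind_return_pmf map_pmf_def)
next
  case (Suc t)
  have "process n E w (Suc (Suc t)) =
     bind_pmf (bind_pmf (pmf_of_set (pairs n)) (\<lambda>p. process n E (avg_step E p w) t))
       (\<lambda>u. map_pmf (\<lambda>p. avg_step E p u) (pmf_of_set (pairs n)))"
    by (simp only: process.simps(2)[of n E w "Suc t"] Suc)
  also have "\<dots> = bind_pmf (pmf_of_set (pairs n)) (\<lambda>p. process n E (avg_step E p w) (Suc t))"
    by (simp add: bind_assoc_pmf)
  finally show ?case .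
qed

lemma finite_set_pmf_process:
  assumes "2 \<le> n"
  shows "finite (set_pmf (process n E w t))"
proof (induction t)
  case 0
  thus ?case by simp
next
  case (Suc t)
  have "set_pmf (pmf_of_set (pairs n)) = pairs n"
    using finite_pairs pairs_nonempty[OF assms] by simp
  with Suc show ?case by (simp add: finite_pairs)
qed

fun expected_cost ::
  "nat \<Rightarrow> nat set set \<Rightarrow> ((nat \<Rightarrow> real) \<Rightarrow> real) \<Rightarrow> nat \<Rightarrow> (nat \<Rightarrow> real) \<Rightarrow> real" where
  "expected_cost n E f 0 w = f w"
| "expected_cost n E f (Suc t) w =
     (\<Sum>p\<in>pairs n. expected_cost n E f t (avg_step E p w)) / real (card (pairs n))"

lemma expectation_process_eq_expected_cost:
  assumes "2 \<le> n"
  shows "measure_pmf.expectation (process n E w t) f = expected_cost n E f t w"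
proof (induction t arbitrary: w)
  case 0
  thus ?case by simp
next
  case (Suc t)
  show ?case
    unfolding process_Suc_first_step
    by (subst pmf_expectation_bind_pmf_of_set)
       (auto simp: pairs_nonempty[OF assms] finite_pairs finite_set_pmf_process[OF assms] Suc
          sum_divide_distrib divide_inverse_commute sum_distrib_left)
qed

definition mid :: "(nat \<Rightarrow> real) \<Rightarrow> (nat \<Rightarrow> real) \<Rightarrow> nat \<Rightarrow> real" where
  "mid x y = (\<lambda>k. (x k + y k) / 2)"

definition midpoint_convex :: "((nat \<Rightarrow> real) \<Rightarrow> real) \<Rightarrow> bool" where
  "midpoint_convex f \<longleftrightarrow> (\<forall>x y. f (mid x y) \<le> (f x + f y) / 2)"

definition transposition_invariant :: "nat \<Rightarrow> ((nat \<Rightarrow> real) \<Rightarrow> real) \<Rightarrow> bool" where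
  "transposition_invariant n f \<longleftrightarrow>
     (\<forall>a<n. \<forall>b<n. \<forall>w. f (w \<circ> Transposition.transpose a b) = f w)"

lemma avg_step_mid: "avg_step E p (mid x y) = mid (avg_step E p x) (avg_step E p y)"
proof -
  have "(\<Sum>j\<in>p. (x j + y j) / 2) = ((\<Sum>j\<in>p. x j) + (\<Sum>j\<in>p. y j)) / 2"
    by (simp add: sum_divide_distrib[symmetric] sum.distrib)
  thus ?thesis unfolding avg_step_def mid_def by (auto simp: fun_eq_iff)
qed

lemma avg_step_edge_eq_mid_transpose:
  assumes "{a, b} \<in> E" "a \<noteq> b"
  shows "avg_step E {a, b} w = mid w (w \<circ> Transposition.transpose a b)"
  using assms by (auto simp: avg_step_def mid_def fun_eq_iff Transposition.transpose_def)

lemma avg_step_complete_transpose: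
  assumes "a < n" "b < n"
  shows "avg_step (pairs n) p (w \<circ> Transposition.transpose a b) =
    avg_step (pairs n) (Transposition.transpose a b ` p) w \<circ> Transposition.transpose a b"
proof -
  let ?s = "Transposition.transpose a b"
  have in_pairs_iff: "?s ` p \<in> pairs n \<longleftrightarrow> p \<in> pairs n"
    using transpose_image_in_pairs[OF assms, of p] transpose_image_in_pairs[OF assms, of "?s ` p"]
    by (auto simp: image_image)
  have "(\<Sum>j\<in>p. w (?s j)) = (\<Sum>j\<in>?s ` p. w j)"
    by (simp add: sum.reindex)
  moreover have "?s k \<in> ?s ` p \<longleftrightarrow> k \<in> p" for k
    by (meson inj_image_mem_iff inj_transpose)
  ultimately show ?thesis
    unfolding avg_step_def in_pairs_iff by (auto simp: fun_eq_iff)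
qed

lemma expected_cost_midpoint_convex:
  assumes "midpoint_convex f"
  shows "midpoint_convex (expected_cost n E f t)"
proof (induction t)
  case 0
  thus ?case using assms by (simp add: midpoint_convex_def)
next
  case (Suc t)
  let ?c = "expected_cost n E f t" and ?N = "real (card (pairs n))"
  show ?case unfolding midpoint_convex_def
  proof (intro allI)
    fix x y
    have "(\<Sum>p\<in>pairs n. ?c (avg_step E p (mid x y)))
        \<le> (\<Sum>p\<in>pairs n. (?c (avg_step E p x) + ?c (avg_step E p y)) / 2)"
      using Suc unfolding avg_step_mid midpoint_convex_def by (intro sum_mono) blast
    hence "(\<Sum>p\<in>pairs n. ?c (avg_step E p (mid x y))) / ?N
        \<le> (\<Sum>p\<in>pairs n. (?c (avg_step E p x) + ?c (avg_step E p y)) / 2) / ?N"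
      by (intro divide_right_mono) auto
    thus "expected_cost n E f (Suc t) (mid x y)
        \<le> (expected_cost n E f (Suc t) x + expected_cost n E f (Suc t) y) / 2"
      by (simp add: sum.distrib sum_divide_distrib add_divide_distrib mult.commute)
  qed
qed

lemma expected_cost_complete_transposition_invariant:
  assumes "transposition_invariant n f"
  shows "transposition_invariant n (expected_cost n (pairs n) f t)"
  unfolding transposition_invariant_def
proof (intro allI impI)
  fix a b w
  assume ab: "a < n" "b < n"
  let ?s = "Transposition.transpose a b"
  show "expected_cost n (pairs n) f t (w \<circ> ?s) = expected_cost n (pairs n) f t w"
  proof (induction t arbitrary: w)
    case 0
    show ?case using assms ab unfolding transposition_invariant_def by (simp del: comp_apply)
  next
    case (Suc t)
    have "(\<Sum>p\<in>pairs n. expected_cost n (pairs n) f t (avg_step (pairs n) p (w \<circ> ?s)))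
        = (\<Sum>p\<in>pairs n. expected_cost n (pairs n) f t (avg_step (pairs n) (?s ` p) w))"
      unfolding avg_step_complete_transpose[OF ab] Suc ..
    also have "\<dots> = (\<Sum>p\<in>pairs n. expected_cost n (pairs n) f t (avg_step (pairs n) p w))"
      using bij_betw_transpose_image_pairs[OF ab] by (rule sum.reindex_bij_betw)
    finally show ?case by (simp del: comp_apply)
  qed
qed

lemma expected_cost_complete_avg_step_le:
  assumes "midpoint_convex f" "transposition_invariant n f" "p \<in> pairs n"
  shows "expected_cost n (pairs n) f t (avg_step (pairs n) p w) \<le> expected_cost n (pairs n) f t w"
proof -
  obtain a b where p: "p = {a, b}" "a < n" "b < n" "a \<noteq> b"
    using assms(3) by (auto simp: pairs_def)
  let ?c = "expected_cost n (pairs n) f t" and ?s = "Transposition.transpose a b"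
  have "?c (avg_step (pairs n) p w) = ?c (mid w (w \<circ> ?s))"
    using avg_step_edge_eq_mid_transpose assms(3) p by simp
  also have "\<dots> \<le> (?c w + ?c (w \<circ> ?s)) / 2"
    using expected_cost_midpoint_convex[OF assms(1)] by (simp add: midpoint_convex_def)
  also have "?c (w \<circ> ?s) = ?c w"
    using expected_cost_complete_transposition_invariant[OF assms(2)] p(2,3)
    by (simp add: transposition_invariant_def)
  finally show ?thesis by simp
qed

lemma expected_cost_complete_le:
  assumes "G \<subseteq> pairs n" "midpoint_convex f" "transposition_invariant n f"
  shows "expected_cost n (pairs n) f t w \<le> expected_cost n G f t w"
proof (induction t arbitrary: w)
  case 0
  thus ?case by simp
next
  case (Suc t)
  have "expected_cost n (pairs n) f t (avg_step (pairs n) p w) \<le> expected_cost n G f t (avg_step G p w)"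
    if "p \<in> pairs n" for p
  proof (cases "p \<in> G")
    case True
    hence "avg_step (pairs n) p w = avg_step G p w"
      using that by (simp add: avg_step_def)
    thus ?thesis using Suc by simp
  next
    case False
    hence "avg_step G p w = w" by (simp add: avg_step_def)
    thus ?thesis
      using expected_cost_complete_avg_step_le[OF assms(2,3) that, of t w] Suc[of w] by simp
  qed
  hence "(\<Sum>p\<in>pairs n. expected_cost n (pairs n) f t (avg_step (pairs n) p w))
      \<le> (\<Sum>p\<in>pairs n. expected_cost n G f t (avg_step G p w))"
    by (rule sum_mono)
  thus ?case by (simp add: divide_right_mono)
qed

lemma l1_dev_midpoint_convex: "midpoint_convex (l1_dev n v)"
  unfolding midpoint_convex_def
proof (intro allI)
  fix x y
  let ?m = "mean_val n v"
  have "\<bar>mid x y i - ?m\<bar> \<le> (\<bar>x i - ?m\<bar> + \<bar>y i - ?m\<bar>) / 2" for i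
    using abs_triangle_ineq[of "x i - ?m" "y i - ?m"] by (simp add: mid_def field_simps)
  hence "l1_dev n v (mid x y) \<le> (\<Sum>i<n. (\<bar>x i - ?m\<bar> + \<bar>y i - ?m\<bar>) / 2)"
    unfolding l1_dev_def by (intro sum_mono)
  also have "\<dots> = (l1_dev n v x + l1_dev n v y) / 2"
    by (simp add: l1_dev_def sum_divide_distrib[symmetric] sum.distrib)
  finally show "l1_dev n v (mid x y) \<le> (l1_dev n v x + l1_dev n v y) / 2" .
qed

lemma l1_dev_transposition_invariant: "transposition_invariant n (l1_dev n v)"
  unfolding transposition_invariant_def l1_dev_def
proof (intro allI impI)
  fix a b w
  assume "a < n" "b < n"
  hence "bij_betw (Transposition.transpose a b) {..<n} {..<n}" by simp
  thus "(\<Sum>i<n. \<bar>(w \<circ> Transposition.transpose a b) i - mean_val n v\<bar>) =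
        (\<Sum>i<n. \<bar>w i - mean_val n v\<bar>)"
    unfolding comp_apply by (rule sum.reindex_bij_betw)
qed

theorem theorem9:
  fixes n :: nat and G :: "nat set set" and v :: "nat \<Rightarrow> real" and t :: nat
  assumes "connected_graph n G"
  shows "expected_T n (complete_graph n) v t \<le> expected_T n G v t"
proof -
  have G: "G \<subseteq> pairs n"
    using assms by (simp add: connected_graph_def graph_on_def)
  show ?thesis
  proof (cases "2 \<le> n")
    case True
    show ?thesis
      unfolding expected_T_def complete_graph_def expectation_process_eq_expected_cost[OF True]
      using expected_cost_complete_le[OF G l1_dev_midpoint_convex l1_dev_transposition_invariant] .
  next
    case False
    hence "G = complete_graph n"
      using G pairs_empty by (simp add: complete_graph_def)
    thus ?thesis by simp
  qed
qed

end
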